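(* Let $X$ and $\Theta$ be compact metric spaces and $\tau:\Theta\times X\to X$, $(\theta,x)\mapsto\tau_\theta(x)$, continuous. Let $\Omega=X\times\Theta$ and let $\hat\nu$ be a holonomic Borel probability measure on $\Omega$, i.e. $\int_\Omega [f(\tau_\theta(x))-f(x)]\,d\hat\nu(x,\theta)=0$ for all $f\in C(X,\mathbb{R})$. Let $d\hat\nu(x,\theta)=d\nu_x(\theta)\,d\nu(x)$ be its disintegration with respect to the projection $T:\Omega\to X$ onto the first coordinate ($\nu=T_*\hat\nu$, and $\nu_x$ probability measures on $\Theta$). Let $\mu$ be a Borel probability measure on $\Theta$ such that $\nu_x\ll\mu$ for $\nu$-a.e. $x$, and let $J_x=d\nu_x/d\mu$ when $\nu_x\ll\mu$ and $J_x\equiv 0$ otherwise. Define $B_\mu(g)(x)=\int_\Theta g(\tau_\theta(x))\,d\mu(\theta)$, \[ h_v(\hat\nu)=\inf_{g\in C(X,\mathbb{R}),\,g>0}\int_X\ln\frac{B_\mu(g)}{g}\,d\nu,\qquad h_a(\hat\nu)=-\int_\Omega \ln J_x(\theta)\,d\nu_x(\theta)\,d\nu(x). \] Then $h_a(\hat\nu)\le h_v(\hat\nu)\le 0$. Moreover, if there exists a positive function $\phi\in C(X,\mathbb{R})$ that is optimal, i.e. $J_x(\theta)=\phi(\tau_\theta(x))/B_\mu(\phi)(x)$, then \[ h_a(\hat\nu)=h_v(\hat\nu)=\int_X\ln\frac{B_\mu(\phi)}{\phi}\,d\nu. \]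
   Context: $h_v$ is called the variational entropy and $h_a$ the average entropy of $\hat\nu$ with a priori probability $\mu$. *)

theory Defs
  imports "HOL-Probability.Probability"
begin

text \<open>Extended-real integral: positive part minus negative part (convention of ereal
  subtraction when both are infinite). Used so that the average entropy may take the
  value minus infinity.\<close>
definition eint :: "'a measure \<Rightarrow> ('a \<Rightarrow> ereal) \<Rightarrow> ereal" where
  "eint M f = enn2ereal (\<integral>\<^sup>+ x. e2ennreal (f x) \<partial>M) - enn2ereal (\<integral>\<^sup>+ x. e2ennreal (- f x) \<partial>M)"

definition Bmu :: "'t measure \<Rightarrow> ('t \<Rightarrow> 'x \<Rightarrow> 'x) \<Rightarrow> ('x \<Rightarrow> real) \<Rightarrow> 'x \<Rightarrow> real" where
  "Bmu \<mu> \<tau> g x = (\<integral> \<theta>. g (\<tau> \<theta> x) \<partial>\<mu>)"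

definition Jac :: "'t measure \<Rightarrow> ('x \<Rightarrow> 't measure) \<Rightarrow> 'x \<Rightarrow> 't \<Rightarrow> real" where
  "Jac \<mu> K x \<theta> = (if absolutely_continuous \<mu> (K x) then enn2real (RN_deriv \<mu> (K x) \<theta>) else 0)"

definition h_v :: "'t measure \<Rightarrow> ('t \<Rightarrow> 'x::topological_space \<Rightarrow> 'x) \<Rightarrow> 'x measure \<Rightarrow> ereal" where
  "h_v \<mu> \<tau> \<nu> = (INF g \<in> {g. continuous_on UNIV g \<and> (\<forall>x. 0 < g x)}.
      ereal (\<integral> x. ln (Bmu \<mu> \<tau> g x / g x) \<partial>\<nu>))"

definition h_a :: "'t measure \<Rightarrow> ('x \<Rightarrow> 't measure) \<Rightarrow> 'x measure \<Rightarrow> ereal" where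
  "h_a \<mu> K \<nu> = - eint \<nu> (\<lambda>x. eint (K x) (\<lambda>\<theta>. ereal (ln (Jac \<mu> K x \<theta>))))"

end

theory Submission
  imports Defs
begin

(* For a positive continuous g, q_x(theta) = g(tau_theta x) / B_mu g(x) is a mu-probability
   density for every x.  Gibbs' inequality (ln t <= t - 1 with t = q_x / J_x) gives
   int ln q_x d nu_x <= int ln J_x d nu_x, with equality when J_x = q_x.  Integrating over nu and
   disintegrating nu-hat, holonomy turns the integral of ln g(tau_theta x) into that of ln g(x),
   so the left side integrates to - int ln (B_mu g / g) d nu.  Hence h_a is below every term of
   the infimum defining h_v, and equals the term of an optimal phi; g = 1 gives h_v <= 0. *)

section \<open>Compact metric spaces\<close>

lemma compact_metric_countable_base:
  assumes "compact (UNIV :: 'a::metric_space set)"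
  obtains \<B> :: "'a::metric_space set set"
  where "countable \<B>" "\<And>B. B \<in> \<B> \<Longrightarrow> open B"
    and "\<And>U x. open U \<Longrightarrow> x \<in> U \<Longrightarrow> \<exists>B\<in>\<B>. x \<in> B \<and> B \<subseteq> U"
proof -
  obtain net :: "real \<Rightarrow> 'a set"
    where net: "\<And>r. 0 < r \<Longrightarrow> finite (net r) \<and> UNIV \<subseteq> (\<Union>c\<in>net r. ball c r)"
    using seq_compact_imp_totally_bounded[OF compact_imp_seq_compact[OF assms]] by metis
  let ?\<B> = "(\<lambda>(r, c). ball c r) ` (SIGMA r:\<rat> \<inter> {0<..}. net r)"
  show ?thesis
  proof
    show "countable ?\<B>"
      using net by (intro countable_image countable_SIGMA countable_finite
          countable_subset[OF Int_lower1 countable_rat]) auto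
    show "open B" if "B \<in> ?\<B>" for B using that by auto
    show "\<exists>B\<in>?\<B>. x \<in> B \<and> B \<subseteq> U" if "open U" "x \<in> U" for U x
    proof -
      obtain e where e: "0 < e" "ball x e \<subseteq> U" using \<open>open U\<close> \<open>x \<in> U\<close> open_contains_ball by blast
      obtain r where r: "r \<in> \<rat>" "0 < r" "r < e / 2" using Rats_dense_in_real[of 0 "e / 2"] e(1) by auto
      obtain c where c: "c \<in> net r" "x \<in> ball c r" using net[OF r(2)] by blast
      have "ball c r \<subseteq> ball x e"
      proof
        fix y assume "y \<in> ball c r"
        then have "dist x y \<le> dist x c + dist y c" "dist x c < r" "dist y c < r"
          using c(2) dist_triangle2[of x y c] by (auto simp: dist_commute)
        then show "y \<in> ball x e" using r(3) by simp
      qed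
      then show ?thesis using c r e(2) by (intro bexI[of _ "ball c r"]) auto
    qed
  qed
qed

lemma sets_pair_borel_of_compact:
  assumes "compact (UNIV :: 'a::metric_space set)" "compact (UNIV :: 'b::metric_space set)"
  shows "sets (borel \<Otimes>\<^sub>M borel :: ('a \<times> 'b) measure) = sets borel"
proof
  show "sets (borel \<Otimes>\<^sub>M borel :: ('a \<times> 'b) measure) \<subseteq> sets borel"
    by (rule sets_pair_in_sets) (simp add: borel_Times)
  obtain \<A> :: "'a set set" where \<A>: "countable \<A>" "\<And>A. A \<in> \<A> \<Longrightarrow> open A"
    "\<And>U x. open U \<Longrightarrow> x \<in> U \<Longrightarrow> \<exists>A\<in>\<A>. x \<in> A \<and> A \<subseteq> U"
    using compact_metric_countable_base[OF assms(1)] by blast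
  obtain \<B> :: "'b set set" where \<B>: "countable \<B>" "\<And>B. B \<in> \<B> \<Longrightarrow> open B"
    "\<And>U x. open U \<Longrightarrow> x \<in> U \<Longrightarrow> \<exists>B\<in>\<B>. x \<in> B \<and> B \<subseteq> U"
    using compact_metric_countable_base[OF assms(2)] by blast
  have "U \<in> sets (borel \<Otimes>\<^sub>M borel)" if "open U" for U :: "('a \<times> 'b) set"
  proof -
    let ?R = "{A \<times> B | A B. A \<in> \<A> \<and> B \<in> \<B> \<and> A \<times> B \<subseteq> U}"
    have "U \<subseteq> \<Union>?R"
    proof
      fix p assume "p \<in> U"
      then obtain S T where "open S" "open T" "p \<in> S \<times> T" "S \<times> T \<subseteq> U"
        using \<open>open U\<close> open_prod_elim by blast
      then obtain A B where "A \<in> \<A>" "B \<in> \<B>" "p \<in> A \<times> B" "A \<subseteq> S" "B \<subseteq> T"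
        using \<A>(3)[of S "fst p"] \<B>(3)[of T "snd p"] by (auto simp: mem_Times_iff)
      then show "p \<in> \<Union>?R" using \<open>S \<times> T \<subseteq> U\<close> by blast
    qed
    then have "U = \<Union>?R" by blast
    moreover have "countable ?R"
      by (rule countable_subset[of _ "(\<lambda>(A, B). A \<times> B) ` (\<A> \<times> \<B>)"]) (auto simp: \<A>(1) \<B>(1))
    moreover have "?R \<subseteq> sets (borel \<Otimes>\<^sub>M borel)"
      using \<A>(2) \<B>(2) by (fastforce intro: pair_measureI borel_open)
    ultimately show ?thesis using sets.countable_Union[of ?R] by simp
  qed
  then show "sets borel \<subseteq> sets (borel \<Otimes>\<^sub>M borel :: ('a \<times> 'b) measure)"
    unfolding sets_borel by (intro sets.sigma_sets_subset') (auto simp: space_pair_measure)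
qed

lemma continuous_on_section:
  "continuous_on UNIV f \<Longrightarrow> continuous_on UNIV (\<lambda>y. f (x, y))"
  using continuous_on_compose2[OF _ continuous_on_Pair[OF continuous_on_const continuous_on_id]]
  by blast

lemma compact_continuous_bounded:
  fixes f :: "'a::topological_space \<Rightarrow> real"
  assumes "compact (UNIV :: 'a set)" "continuous_on UNIV f"
  obtains C where "\<And>x. \<bar>f x\<bar> \<le> C"
proof -
  have "bounded (range f)"
    by (rule compact_imp_bounded[OF compact_continuous_image[OF assms(2,1)]])
  then obtain C where "\<And>x. \<bar>f x\<bar> \<le> C" by (auto simp: bounded_iff)
  then show thesis by (rule that)
qed

lemma (in prob_space) abs_integral_le_const:
  fixes f :: "'a \<Rightarrow> real"
  assumes "f \<in> borel_measurable M" "\<And>x. \<bar>f x\<bar> \<le> C"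
  shows "\<bar>\<integral>x. f x \<partial>M\<bar> \<le> C"
proof -
  have "integrable M f" using assms by (intro integrable_const_bound[where B=C]) auto
  then have "- C \<le> (\<integral>x. f x \<partial>M)" "(\<integral>x. f x \<partial>M) \<le> C"
    using assms(2) by (auto intro!: integral_ge_const integral_le_const AE_I2 simp: abs_le_iff minus_le_iff)
  then show ?thesis by linarith
qed

lemma integrable_continuous_compact:
  fixes f :: "'a::topological_space \<Rightarrow> real"
  assumes "finite_measure M" "sets M = sets borel" "compact (UNIV :: 'a set)" "continuous_on UNIV f"
  shows "integrable M f"
proof -
  interpret finite_measure M by fact
  obtain C where "\<And>x. \<bar>f x\<bar> \<le> C"
    using compact_continuous_bounded[OF assms(3,4)] by blast
  moreover have "f \<in> borel_measurable M"
    using borel_measurable_continuous_onI[OF assms(4)] assms(2) by (simp cong: measurable_cong_sets)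
  ultimately show ?thesis by (intro integrable_const_bound[where B=C]) auto
qed

lemma continuous_on_integral_param:
  fixes f :: "'b::metric_space \<times> 'a::metric_space \<Rightarrow> real"
  assumes "prob_space M" and M: "sets M = sets borel"
    and compact: "compact (UNIV :: 'b set)" "compact (UNIV :: 'a set)"
    and f: "continuous_on UNIV f"
  shows "continuous_on UNIV (\<lambda>x. \<integral>\<theta>. f (x, \<theta>) \<partial>M)"
proof -
  interpret prob_space M by fact
  have "compact (UNIV :: ('b \<times> 'a) set)"
    using compact_Times[OF compact] by simp
  then have uc: "uniformly_continuous_on UNIV f"
    using f by (rule compact_uniformly_continuous[rotated])
  have f_x: "continuous_on UNIV (\<lambda>\<theta>. f (x, \<theta>))" for x
    by (rule continuous_on_section[OF f])
  have "uniformly_continuous_on UNIV (\<lambda>x. \<integral>\<theta>. f (x, \<theta>) \<partial>M)"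
    unfolding uniformly_continuous_on_def
  proof (intro allI impI)
    fix e :: real assume "0 < e"
    then obtain d where d: "0 < d" "\<And>p p'. dist p' p < d \<Longrightarrow> dist (f p') (f p) < e / 2"
      using uc unfolding uniformly_continuous_on_def by (metis half_gt_zero UNIV_I)
    have "dist (\<integral>\<theta>. f (x', \<theta>) \<partial>M) (\<integral>\<theta>. f (x, \<theta>) \<partial>M) < e" if "dist x' x < d" for x x'
    proof -
      have "dist (f (x', \<theta>)) (f (x, \<theta>)) < e / 2" for \<theta>
        using d(2)[of "(x', \<theta>)" "(x, \<theta>)"] that by (simp add: dist_Pair_Pair)
      moreover have "(\<lambda>\<theta>. f (x', \<theta>) - f (x, \<theta>)) \<in> borel_measurable M"
        using f_x M by (auto intro!: borel_measurable_continuous_onI continuous_intros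
            cong: measurable_cong_sets)
      ultimately have "\<bar>\<integral>\<theta>. f (x', \<theta>) - f (x, \<theta>) \<partial>M\<bar> \<le> e / 2"
        by (intro abs_integral_le_const) (auto simp: dist_real_def less_imp_le)
      then show ?thesis
        using \<open>0 < e\<close> integrable_continuous_compact[OF finite_measure_axioms M compact(2) f_x]
        by (simp add: dist_real_def)
    qed
    then show "\<exists>d>0. \<forall>x\<in>UNIV. \<forall>x'\<in>UNIV. dist x' x < d \<longrightarrow>
        dist (\<integral>\<theta>. f (x', \<theta>) \<partial>M) (\<integral>\<theta>. f (x, \<theta>) \<partial>M) < e"
      using d(1) by blast
  qed
  then show ?thesis by (rule uniformly_continuous_imp_continuous)
qed

section \<open>Extended integrals and Gibbs' inequality\<close>

lemma eint_mono_AE: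
  assumes "AE x in M. f x \<le> g x"
  shows "eint M f \<le> eint M g"
proof -
  have "(\<integral>\<^sup>+ x. e2ennreal (f x) \<partial>M) \<le> (\<integral>\<^sup>+ x. e2ennreal (g x) \<partial>M)"
    "(\<integral>\<^sup>+ x. e2ennreal (- g x) \<partial>M) \<le> (\<integral>\<^sup>+ x. e2ennreal (- f x) \<partial>M)"
    using assms by (auto intro!: nn_integral_mono_AE e2ennreal_mono elim!: eventually_mono)
  then show ?thesis
    unfolding eint_def by (intro ereal_minus_mono) (auto simp: less_eq_ennreal.rep_eq)
qed

lemma eint_eq_integral:
  fixes f :: "'a \<Rightarrow> real"
  assumes "integrable M f"
  shows "eint M (\<lambda>x. ereal (f x)) = ereal (integral\<^sup>L M f)"
proof -
  have "(\<integral>\<^sup>+ x. ennreal (f x) \<partial>M) < \<infinity>" "(\<integral>\<^sup>+ x. ennreal (- f x) \<partial>M) < \<infinity>"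
    using assms by (auto simp: integrable_iff_bounded
        intro: le_less_trans[OF nn_integral_mono[where v="\<lambda>x. ennreal (norm (f x))"]])
  moreover have "enn2ereal a = ereal (enn2real a)" if "a < top" for a :: ennreal
    using that by (cases a rule: ennreal_cases) auto
  ultimately show ?thesis
    unfolding eint_def real_lebesgue_integral_def[OF assms] by (simp add: e2ennreal_ereal)
qed

lemma eint_eq_infinity_or_integrable:
  fixes f :: "'a \<Rightarrow> real"
  assumes f: "f \<in> borel_measurable M" and neg: "(\<integral>\<^sup>+ x. ennreal (- f x) \<partial>M) < \<infinity>"
  shows "eint M (\<lambda>x. ereal (f x)) = \<infinity> \<or> integrable M f"
proof (cases "(\<integral>\<^sup>+ x. ennreal (f x) \<partial>M) = \<infinity>")
  case True
  then show ?thesis using neg by (simp add: eint_def e2ennreal_ereal)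
next
  case False
  have "(\<integral>\<^sup>+ x. ennreal (norm (f x)) \<partial>M) = (\<integral>\<^sup>+ x. ennreal (f x) + ennreal (- f x) \<partial>M)"
    by (intro nn_integral_cong) (auto simp: ennreal_neg abs_if)
  also have "\<dots> = (\<integral>\<^sup>+ x. ennreal (f x) \<partial>M) + (\<integral>\<^sup>+ x. ennreal (- f x) \<partial>M)"
    using f by (intro nn_integral_add) auto
  also have "\<dots> < \<infinity>" using False neg by (simp add: less_top)
  finally show ?thesis using f by (simp add: integrable_iff_bounded)
qed

lemma mult_neg_ln_le_one:
  fixes x :: real
  assumes "0 \<le> x"
  shows "x * - ln x \<le> 1"
proof (cases "x = 0")
  case False
  then have "x * - ln x = x * ln (1 / x)" using assms by (simp add: ln_div)
  also have "\<dots> \<le> x * (1 / x - 1)"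
    using assms False by (intro mult_left_mono ln_le_minus_one) auto
  also have "\<dots> \<le> 1" using assms False by (simp add: field_simps)
  finally show ?thesis .
qed simp

lemma (in sigma_finite_measure) density_enn2real_RN_deriv:
  assumes "sigma_finite_measure N" "absolutely_continuous M N" "sets N = sets M"
  shows "N = density M (\<lambda>x. ennreal (enn2real (RN_deriv M N x)))"
proof -
  have "N = density M (RN_deriv M N)"
    using density_RN_deriv[OF assms(2,3)] by simp
  also have "\<dots> = density M (\<lambda>x. ennreal (enn2real (RN_deriv M N x)))"
    using RN_deriv_finite[OF assms]
    by (intro density_cong) (auto simp: ennreal_enn2real_if elim!: eventually_mono)
  finally show ?thesis .
qed

lemma nn_integral_neg_ln_density_le:
  fixes J :: "'a \<Rightarrow> real"
  assumes "J \<in> borel_measurable M" "\<And>x. 0 \<le> J x"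
  shows "(\<integral>\<^sup>+ x. ennreal (- ln (J x)) \<partial>density M J) \<le> emeasure M (space M)"
proof -
  have "(\<integral>\<^sup>+ x. ennreal (- ln (J x)) \<partial>density M J) = (\<integral>\<^sup>+ x. ennreal (J x * - ln (J x)) \<partial>M)"
    using assms by (simp add: nn_integral_density ennreal_mult'[symmetric] del: mult_minus_right)
  also have "\<dots> \<le> (\<integral>\<^sup>+ x. 1 \<partial>M)"
    using mult_neg_ln_le_one[OF assms(2)] by (intro nn_integral_mono) (simp add: ennreal_le_1)
  finally show ?thesis by simp
qed

text \<open>Gibbs' inequality, from \<open>ln t \<le> t - 1\<close> applied to \<open>t = q / J\<close>.\<close>
lemma integral_ln_le_integral_ln_density:
  fixes J q :: "'a \<Rightarrow> real"
  assumes N: "N = density M J" "prob_space N"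
    and J: "J \<in> borel_measurable M" "\<And>x. 0 \<le> J x"
    and q: "q \<in> borel_measurable M" "\<And>x. 0 < q x" "integrable M q" "integral\<^sup>L M q \<le> 1"
    and ln_int: "integrable N (\<lambda>x. ln (J x))" "integrable N (\<lambda>x. ln (q x))"
  shows "(\<integral>x. ln (q x) \<partial>N) \<le> (\<integral>x. ln (J x) \<partial>N)"
proof -
  interpret N: prob_space N by fact
  have ratio_int_M: "integrable M (\<lambda>x. J x * (q x / J x))"
    using J q by (intro Bochner_Integration.integrable_bound[OF q(3)] borel_measurable_times
        borel_measurable_divide AE_I2) (auto simp: less_imp_le)
  have ratio_int: "integrable N (\<lambda>x. q x / J x)"
    using ratio_int_M J q by (simp add: N(1) integrable_density)
  have "(\<integral>x. q x / J x \<partial>N) = (\<integral>x. J x * (q x / J x) \<partial>M)"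
    using J q by (simp add: N(1) integral_density)
  also have "\<dots> \<le> integral\<^sup>L M q"
    using J q by (intro integral_mono[OF ratio_int_M q(3)]) (simp add: less_imp_le)
  finally have ratio_le: "(\<integral>x. q x / J x \<partial>N) \<le> 1" using q(4) by linarith
  have "AE x in N. 0 < J x" unfolding N(1) using J by (subst AE_density) auto
  then have "AE x in N. ln (q x) \<le> ln (J x) + (q x / J x - 1)"
  proof (rule eventually_mono)
    fix x assume "0 < J x"
    then have "ln (q x) - ln (J x) \<le> q x / J x - 1"
      using q(2)[of x] ln_le_minus_one[of "q x / J x"] by (simp add: ln_div)
    then show "ln (q x) \<le> ln (J x) + (q x / J x - 1)" by simp
  qed
  then have "(\<integral>x. ln (q x) \<partial>N) \<le> (\<integral>x. ln (J x) + (q x / J x - 1) \<partial>N)"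
    using ln_int ratio_int by (intro integral_mono_AE) auto
  also have "\<dots> = (\<integral>x. ln (J x) \<partial>N) + ((\<integral>x. q x / J x \<partial>N) - 1)"
    using ln_int ratio_int by (simp add: N.prob_space)
  finally show ?thesis using ratio_le by linarith
qed

lemma ereal_integral_ln_le_eint_ln_RN_deriv:
  fixes q :: "'a \<Rightarrow> real"
  assumes M: "prob_space M" and N: "prob_space N" "absolutely_continuous M N" "sets N = sets M"
    and q: "q \<in> borel_measurable M" "\<And>x. 0 < q x" "integrable M q" "integral\<^sup>L M q \<le> 1"
    and ln_q_int: "integrable N (\<lambda>x. ln (q x))"
  shows "ereal (\<integral>x. ln (q x) \<partial>N) \<le> eint N (\<lambda>x. ereal (ln (enn2real (RN_deriv M N x))))"
proof -
  interpret M: prob_space M by fact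
  interpret N: prob_space N by fact
  define J where "J x = enn2real (RN_deriv M N x)" for x
  have J: "J \<in> borel_measurable M" "\<And>x. 0 \<le> J x" unfolding J_def by auto
  have N_eq: "N = density M J"
    unfolding J_def by (rule M.density_enn2real_RN_deriv[OF _ N(2,3)]) unfold_locales
  \<comment> \<open>\<open>J (- ln J) \<le> 1\<close> makes the negative part of \<open>ln J\<close> integrable, so the extended
    integral of \<open>ln J\<close> is either \<open>\<infinity>\<close> or an ordinary integral\<close>
  have "(\<integral>\<^sup>+ x. ennreal (- ln (J x)) \<partial>N) < \<infinity>"
    using nn_integral_neg_ln_density_le[OF J] by (simp add: N_eq M.emeasure_space_1 le_less_trans)
  moreover have "(\<lambda>x. ln (J x)) \<in> borel_measurable N"
    using J(1) N(3) by (simp cong: measurable_cong_sets)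
  ultimately consider "eint N (\<lambda>x. ereal (ln (J x))) = \<infinity>" | "integrable N (\<lambda>x. ln (J x))"
    using eint_eq_infinity_or_integrable by blast
  then show ?thesis
  proof cases
    case 2
    then show ?thesis
      using integral_ln_le_integral_ln_density[OF N_eq N(1) J q 2 ln_q_int]
      by (simp add: J_def eint_eq_integral)
  qed (simp add: J_def)
qed

section \<open>Integration along a disintegration\<close>

locale borel_disintegration =
  fixes \<nu>hat :: "('x::topological_space \<times> 't::topological_space) measure"
    and K :: "'x \<Rightarrow> 't measure"
  assumes sets_pair_borel: "sets (borel \<Otimes>\<^sub>M borel :: ('x \<times> 't) measure) = sets borel"
    and nuhat_prob: "prob_space \<nu>hat" and nuhat_sets: "sets \<nu>hat = sets borel"
    and K_prob: "\<And>x. prob_space (K x)" and K_sets: "\<And>x. sets (K x) = sets borel"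
    and K_meas: "\<And>A. A \<in> sets borel \<Longrightarrow> (\<lambda>x. emeasure (K x) A) \<in> borel_measurable borel"
    and disint: "\<And>E. E \<in> sets borel \<Longrightarrow>
        emeasure \<nu>hat E = (\<integral>\<^sup>+ x. emeasure (K x) (Pair x -` E) \<partial>(distr \<nu>hat borel fst))"
begin

abbreviation \<nu> :: "'x measure" where "\<nu> \<equiv> distr \<nu>hat borel fst"

lemma fst_measurable: "fst \<in> \<nu>hat \<rightarrow>\<^sub>M borel"
proof -
  have "fst \<in> (borel :: ('x \<times> 't) measure) \<rightarrow>\<^sub>M borel"
    by (intro borel_measurable_continuous_onI continuous_intros)
  then show ?thesis using nuhat_sets by (simp cong: measurable_cong_sets)
qed

lemma prob_space_nu: "prob_space \<nu>"
  by (rule prob_space.prob_space_distr[OF nuhat_prob fst_measurable])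

lemma K_measurable: "K \<in> \<nu> \<rightarrow>\<^sub>M subprob_algebra borel"
  using K_prob K_sets K_meas
  by (intro measurable_subprob_algebra prob_space_imp_subprob_space) (auto cong: measurable_cong_sets)

lemma Pair_measurable: "Pair x \<in> K x \<rightarrow>\<^sub>M (borel \<Otimes>\<^sub>M borel)"
  by (rule measurable_Pair[OF measurable_const measurable_ident_sets[OF K_sets]]) simp

lemma Pair_kernel_measurable:
  "(\<lambda>x. distr (K x) (borel \<Otimes>\<^sub>M borel) (Pair x)) \<in> \<nu> \<rightarrow>\<^sub>M subprob_algebra (borel \<Otimes>\<^sub>M borel)"
proof -
  have "(\<lambda>(x, y). (x, y)) \<in> (\<nu> \<Otimes>\<^sub>M (borel :: 't measure)) \<rightarrow>\<^sub>M (borel \<Otimes>\<^sub>M borel)"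
    by (simp add: measurable_ident_sets sets_pair_measure_cong)
  then show ?thesis
    using measurable_distr2[where f=Pair and g=K and L=\<nu> and M=borel, OF _ K_measurable] by simp
qed

lemma nuhat_eq_bind: "\<nu>hat = \<nu> \<bind> (\<lambda>x. distr (K x) (borel \<Otimes>\<^sub>M borel) (Pair x))"
proof (rule measure_eqI)
  show "sets \<nu>hat = sets (\<nu> \<bind> (\<lambda>x. distr (K x) (borel \<Otimes>\<^sub>M borel) (Pair x)))"
    by (subst sets_bind) (auto simp: sets_pair_borel nuhat_sets)
  fix E assume "E \<in> sets \<nu>hat"
  then have E: "E \<in> sets borel" "E \<in> sets (borel \<Otimes>\<^sub>M borel)"
    using nuhat_sets sets_pair_borel by auto
  have "emeasure (distr (K x) (borel \<Otimes>\<^sub>M borel) (Pair x)) E = emeasure (K x) (Pair x -` E)" for x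
    using emeasure_distr[OF Pair_measurable E(2)] sets_eq_imp_space_eq[OF K_sets[of x]] by simp
  then show "emeasure \<nu>hat E = emeasure (\<nu> \<bind> (\<lambda>x. distr (K x) (borel \<Otimes>\<^sub>M borel) (Pair x))) E"
    using disint[OF E(1)] emeasure_bind[OF _ Pair_kernel_measurable E(2)] by simp
qed

lemma integral_nuhat_disintegration:
  fixes h :: "'x \<times> 't \<Rightarrow> real"
  assumes h: "h \<in> borel_measurable borel" "\<And>p. \<bar>h p\<bar> \<le> C"
  shows "integral\<^sup>L \<nu>hat h = (\<integral>x. (\<integral>\<theta>. h (x, \<theta>) \<partial>K x) \<partial>\<nu>)"
    and "integrable \<nu> (\<lambda>x. \<integral>\<theta>. h (x, \<theta>) \<partial>K x)"
proof -
  interpret \<nu>: prob_space \<nu> by (rule prob_space_nu)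
  have h': "h \<in> borel_measurable (borel \<Otimes>\<^sub>M borel)"
    using h(1) sets_pair_borel by (simp cong: measurable_cong_sets)
  have inner: "integral\<^sup>L (distr (K x) (borel \<Otimes>\<^sub>M borel) (Pair x)) h = (\<integral>\<theta>. h (x, \<theta>) \<partial>K x)" for x
    by (rule integral_distr[OF Pair_measurable h'])
  have "integral\<^sup>L \<nu>hat h = (\<integral>x. integral\<^sup>L (distr (K x) (borel \<Otimes>\<^sub>M borel) (Pair x)) h \<partial>\<nu>)"
    using h(2) prob_space.emeasure_le_1[OF K_prob]
    by (subst nuhat_eq_bind, intro integral_bind[OF h' _ Pair_kernel_measurable, where B'=1])
      (auto simp: \<nu>.finite_measure_axioms emeasure_distr Pair_measurable)
  then show "integral\<^sup>L \<nu>hat h = (\<integral>x. (\<integral>\<theta>. h (x, \<theta>) \<partial>K x) \<partial>\<nu>)"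
    by (simp add: inner)
  have "(\<lambda>x. integral\<^sup>L (distr (K x) (borel \<Otimes>\<^sub>M borel) (Pair x)) h) \<in> borel_measurable \<nu>"
    by (rule measurable_compose[OF Pair_kernel_measurable integral_measurable_subprob_algebra[OF h']])
  moreover have "\<bar>\<integral>\<theta>. h (x, \<theta>) \<partial>K x\<bar> \<le> C" for x
  proof -
    have "(\<lambda>\<theta>. h (x, \<theta>)) \<in> borel_measurable (K x)"
      using h' by (simp add: measurable_compose[OF Pair_measurable])
    then show ?thesis by (rule prob_space.abs_integral_le_const[OF K_prob]) (rule h(2))
  qed
  ultimately show "integrable \<nu> (\<lambda>x. \<integral>\<theta>. h (x, \<theta>) \<partial>K x)"
    by (intro \<nu>.integrable_const_bound[where B=C]) (auto simp: inner)
qed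

end

section \<open>Average versus variational entropy\<close>

locale holonomic_disintegration =
  fixes \<tau> :: "'t::metric_space \<Rightarrow> 'x::metric_space \<Rightarrow> 'x"
    and \<nu>hat :: "('x \<times> 't) measure"
    and K :: "'x \<Rightarrow> 't measure"
    and \<mu> :: "'t measure"
  assumes X_compact: "compact (UNIV :: 'x set)"
    and Theta_compact: "compact (UNIV :: 't set)"
    and tau_cont: "continuous_on UNIV (\<lambda>(\<theta>, x). \<tau> \<theta> x)"
    and nuhat_prob: "prob_space \<nu>hat" and nuhat_sets: "sets \<nu>hat = sets borel"
    and holonomic: "\<And>f :: 'x \<Rightarrow> real. continuous_on UNIV f \<Longrightarrow>
        (\<integral> (x, \<theta>). f (\<tau> \<theta> x) - f x \<partial>\<nu>hat) = 0"
    and K_prob: "\<And>x. prob_space (K x)" and K_sets: "\<And>x. sets (K x) = sets borel"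
    and K_meas: "\<And>A. A \<in> sets borel \<Longrightarrow> (\<lambda>x. emeasure (K x) A) \<in> borel_measurable borel"
    and disint: "\<And>E. E \<in> sets borel \<Longrightarrow>
        emeasure \<nu>hat E = (\<integral>\<^sup>+ x. emeasure (K x) (Pair x -` E) \<partial>(distr \<nu>hat borel fst))"
    and mu_prob: "prob_space \<mu>" and mu_sets: "sets \<mu> = sets borel"
    and ac: "AE x in distr \<nu>hat borel fst. absolutely_continuous \<mu> (K x)"
begin

sublocale borel_disintegration \<nu>hat K
  by (intro borel_disintegration.intro sets_pair_borel_of_compact X_compact Theta_compact
      nuhat_prob nuhat_sets K_prob K_sets K_meas disint)

lemma compact_pair: "compact (UNIV :: ('x \<times> 't) set)"
  using compact_Times[OF X_compact Theta_compact] by simp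

context
  fixes g :: "'x \<Rightarrow> real"
  assumes g_cont: "continuous_on UNIV g" and g_pos: "\<And>x. 0 < g x"
begin

lemma continuous_g_tau: "continuous_on UNIV (\<lambda>(x, \<theta>). g (\<tau> \<theta> x))"
proof -
  have "continuous_on UNIV (\<lambda>p :: 'x \<times> 't. \<tau> (snd p) (fst p))"
    using continuous_on_compose2[OF tau_cont continuous_on_swap[of UNIV]]
    by (simp add: case_prod_beta)
  then show ?thesis
    using continuous_on_compose2[OF g_cont] by (simp add: case_prod_beta)
qed

lemma Bmu_continuous: "continuous_on UNIV (Bmu \<mu> \<tau> g)"
  unfolding Bmu_def
  using continuous_on_integral_param[OF mu_prob mu_sets X_compact Theta_compact continuous_g_tau]
  by simp

lemma Bmu_pos: "0 < Bmu \<mu> \<tau> g x"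
proof -
  interpret prob_space \<mu> by (rule mu_prob)
  obtain x0 where x0: "\<And>y. g x0 \<le> g y"
    using continuous_attains_inf[OF X_compact _ g_cont] by auto
  have "continuous_on UNIV (\<lambda>\<theta>. g (\<tau> \<theta> x))"
    using continuous_on_section[OF continuous_g_tau] by simp
  then have "g x0 \<le> Bmu \<mu> \<tau> g x"
    unfolding Bmu_def using x0
    by (intro integral_ge_const AE_I2
        integrable_continuous_compact[OF finite_measure_axioms mu_sets Theta_compact])
  then show ?thesis using g_pos[of x0] by linarith
qed

lemma continuous_ln_Bmu_density:
  "continuous_on UNIV (\<lambda>(x, \<theta>). ln (g (\<tau> \<theta> x) / Bmu \<mu> \<tau> g x))"
proof -
  have "continuous_on UNIV (\<lambda>p::'x \<times> 't. Bmu \<mu> \<tau> g (fst p))"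
    using continuous_on_compose2[OF Bmu_continuous continuous_on_fst[OF continuous_on_id]] by simp
  then show ?thesis
    using continuous_g_tau
    by (auto simp: case_prod_beta less_imp_not_eq2[OF g_pos] less_imp_not_eq2[OF Bmu_pos]
        intro!: continuous_on_ln continuous_on_divide)
qed

lemma continuous_ln_Bmu_ratio: "continuous_on UNIV (\<lambda>x. ln (Bmu \<mu> \<tau> g x / g x))"
  using Bmu_continuous g_cont
  by (auto simp: less_imp_not_eq2[OF g_pos] less_imp_not_eq2[OF Bmu_pos]
      intro!: continuous_on_ln continuous_on_divide)

lemma integral_nuhat_ln_Bmu_density:
  "(\<integral>(x, \<theta>). ln (g (\<tau> \<theta> x) / Bmu \<mu> \<tau> g x) \<partial>\<nu>hat)
     = - (\<integral>x. ln (Bmu \<mu> \<tau> g x / g x) \<partial>\<nu>)"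
proof -
  let ?A = "\<lambda>(x, \<theta>). ln (g (\<tau> \<theta> x)) - ln (g x)"
  let ?B = "\<lambda>p::'x \<times> 't. ln (Bmu \<mu> \<tau> g (fst p) / g (fst p))"
  have ln_g: "continuous_on UNIV (\<lambda>x. ln (g x))"
    using g_cont by (auto simp: less_imp_not_eq2[OF g_pos] intro!: continuous_on_ln)
  have "continuous_on UNIV ?A"
    using continuous_g_tau g_cont
    by (auto simp: case_prod_beta less_imp_not_eq2[OF g_pos] intro!: continuous_on_ln continuous_on_diff
        continuous_on_compose2[OF g_cont continuous_on_fst[OF continuous_on_id]])
  moreover have "continuous_on UNIV ?B"
    using continuous_on_compose2[OF continuous_ln_Bmu_ratio continuous_on_fst[OF continuous_on_id]]
    by simp
  moreover have "(\<lambda>(x, \<theta>). ln (g (\<tau> \<theta> x) / Bmu \<mu> \<tau> g x)) = (\<lambda>p. ?A p - ?B p)"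
    by (auto simp: fun_eq_iff ln_div less_imp_not_eq2[OF g_pos] less_imp_not_eq2[OF Bmu_pos])
  ultimately have "(\<integral>(x, \<theta>). ln (g (\<tau> \<theta> x) / Bmu \<mu> \<tau> g x) \<partial>\<nu>hat)
      = integral\<^sup>L \<nu>hat ?A - integral\<^sup>L \<nu>hat ?B"
    using integrable_continuous_compact[OF prob_space.finite_measure[OF nuhat_prob] nuhat_sets
        compact_pair]
    by (simp add: Bochner_Integration.integral_diff)
  \<comment> \<open>holonomy makes the \<open>?A\<close> term vanish\<close>
  also have "\<dots> = - (\<integral>x. ln (Bmu \<mu> \<tau> g x / g x) \<partial>\<nu>)"
    using holonomic[OF ln_g]
      integral_distr[OF fst_measurable borel_measurable_continuous_onI[OF continuous_ln_Bmu_ratio]]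
    by simp
  finally show ?thesis .
qed

lemma integral_ln_Bmu_density:
  "integrable \<nu> (\<lambda>x. \<integral>\<theta>. ln (g (\<tau> \<theta> x) / Bmu \<mu> \<tau> g x) \<partial>K x)"
  "(\<integral>x. (\<integral>\<theta>. ln (g (\<tau> \<theta> x) / Bmu \<mu> \<tau> g x) \<partial>K x) \<partial>\<nu>)
     = - (\<integral>x. ln (Bmu \<mu> \<tau> g x / g x) \<partial>\<nu>)"
proof -
  obtain C where "\<And>p. \<bar>(\<lambda>(x, \<theta>). ln (g (\<tau> \<theta> x) / Bmu \<mu> \<tau> g x)) p\<bar> \<le> C"
    using compact_continuous_bounded[OF compact_pair continuous_ln_Bmu_density] by blast
  note disintegrate = integral_nuhat_disintegration[OF
      borel_measurable_continuous_onI[OF continuous_ln_Bmu_density] this]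
  then show "integrable \<nu> (\<lambda>x. \<integral>\<theta>. ln (g (\<tau> \<theta> x) / Bmu \<mu> \<tau> g x) \<partial>K x)"
    by simp
  show "(\<integral>x. (\<integral>\<theta>. ln (g (\<tau> \<theta> x) / Bmu \<mu> \<tau> g x) \<partial>K x) \<partial>\<nu>)
     = - (\<integral>x. ln (Bmu \<mu> \<tau> g x / g x) \<partial>\<nu>)"
    using disintegrate integral_nuhat_ln_Bmu_density by simp
qed

lemma continuous_ln_Bmu_density_at: "continuous_on UNIV (\<lambda>\<theta>. ln (g (\<tau> \<theta> x) / Bmu \<mu> \<tau> g x))"
  using continuous_on_section[OF continuous_ln_Bmu_density] by simp

lemma Bmu_density_properties:
  "(\<lambda>\<theta>. g (\<tau> \<theta> x) / Bmu \<mu> \<tau> g x) \<in> borel_measurable \<mu>"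
  "integrable \<mu> (\<lambda>\<theta>. g (\<tau> \<theta> x) / Bmu \<mu> \<tau> g x)"
  "(\<integral>\<theta>. g (\<tau> \<theta> x) / Bmu \<mu> \<tau> g x \<partial>\<mu>) = 1"
proof -
  have cont: "continuous_on UNIV (\<lambda>\<theta>. g (\<tau> \<theta> x) / Bmu \<mu> \<tau> g x)"
    using continuous_on_section[OF continuous_g_tau]
    by (auto simp: less_imp_not_eq2[OF Bmu_pos] intro!: continuous_on_divide)
  then show "(\<lambda>\<theta>. g (\<tau> \<theta> x) / Bmu \<mu> \<tau> g x) \<in> borel_measurable \<mu>"
    using mu_sets by (simp add: borel_measurable_continuous_onI cong: measurable_cong_sets)
  show "integrable \<mu> (\<lambda>\<theta>. g (\<tau> \<theta> x) / Bmu \<mu> \<tau> g x)"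
    by (rule integrable_continuous_compact[OF prob_space.finite_measure[OF mu_prob] mu_sets
          Theta_compact cont])
  show "(\<integral>\<theta>. g (\<tau> \<theta> x) / Bmu \<mu> \<tau> g x \<partial>\<mu>) = 1"
    using Bmu_pos[of x] by (simp add: Bmu_def)
qed

lemma ln_Bmu_density_le_eint_ln_Jac:
  assumes "absolutely_continuous \<mu> (K x)"
  shows "ereal (\<integral>\<theta>. ln (g (\<tau> \<theta> x) / Bmu \<mu> \<tau> g x) \<partial>K x)
    \<le> eint (K x) (\<lambda>\<theta>. ereal (ln (Jac \<mu> K x \<theta>)))"
  using ereal_integral_ln_le_eint_ln_RN_deriv[OF mu_prob K_prob assms _
      Bmu_density_properties(1) _ Bmu_density_properties(2)]
    Bmu_density_properties(3) Bmu_pos g_pos assms K_sets mu_sets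
    integrable_continuous_compact[OF prob_space.finite_measure[OF K_prob] K_sets Theta_compact
      continuous_ln_Bmu_density_at]
  by (simp add: Jac_def)

lemma eint_ln_Jac_eq_ln_Bmu_density:
  assumes K_ac: "absolutely_continuous \<mu> (K x)"
    and optimal: "AE \<theta> in \<mu>. Jac \<mu> K x \<theta> = g (\<tau> \<theta> x) / Bmu \<mu> \<tau> g x"
  shows "eint (K x) (\<lambda>\<theta>. ereal (ln (Jac \<mu> K x \<theta>)))
    = ereal (\<integral>\<theta>. ln (g (\<tau> \<theta> x) / Bmu \<mu> \<tau> g x) \<partial>K x)"
proof -
  have "AE \<theta> in K x. Jac \<mu> K x \<theta> = g (\<tau> \<theta> x) / Bmu \<mu> \<tau> g x"
    using absolutely_continuous_AE[OF _ K_ac optimal] K_sets mu_sets by simp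
  then have "eint (K x) (\<lambda>\<theta>. ereal (ln (Jac \<mu> K x \<theta>)))
      = eint (K x) (\<lambda>\<theta>. ereal (ln (g (\<tau> \<theta> x) / Bmu \<mu> \<tau> g x)))"
    by (intro antisym eint_mono_AE) (auto elim!: eventually_mono)
  also have "\<dots> = ereal (\<integral>\<theta>. ln (g (\<tau> \<theta> x) / Bmu \<mu> \<tau> g x) \<partial>K x)"
    by (intro eint_eq_integral integrable_continuous_compact[OF prob_space.finite_measure[OF K_prob]
          K_sets Theta_compact continuous_ln_Bmu_density_at])
  finally show ?thesis .
qed

lemma h_a_le_integral_ln_Bmu_ratio: "h_a \<mu> K \<nu> \<le> ereal (\<integral>x. ln (Bmu \<mu> \<tau> g x / g x) \<partial>\<nu>)"
proof -
  have "eint \<nu> (\<lambda>x. ereal (\<integral>\<theta>. ln (g (\<tau> \<theta> x) / Bmu \<mu> \<tau> g x) \<partial>K x))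
      \<le> eint \<nu> (\<lambda>x. eint (K x) (\<lambda>\<theta>. ereal (ln (Jac \<mu> K x \<theta>))))"
    using ac by (intro eint_mono_AE) (auto elim!: eventually_mono intro: ln_Bmu_density_le_eint_ln_Jac)
  then show ?thesis
    by (simp add: h_a_def eint_eq_integral integral_ln_Bmu_density ereal_uminus_le_reorder)
qed

lemma h_a_eq_integral_ln_Bmu_ratio:
  assumes "AE x in \<nu>. AE \<theta> in \<mu>. Jac \<mu> K x \<theta> = g (\<tau> \<theta> x) / Bmu \<mu> \<tau> g x"
  shows "h_a \<mu> K \<nu> = ereal (\<integral>x. ln (Bmu \<mu> \<tau> g x / g x) \<partial>\<nu>)"
proof -
  have "AE x in \<nu>. eint (K x) (\<lambda>\<theta>. ereal (ln (Jac \<mu> K x \<theta>)))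
      = ereal (\<integral>\<theta>. ln (g (\<tau> \<theta> x) / Bmu \<mu> \<tau> g x) \<partial>K x)"
    using ac assms by eventually_elim (rule eint_ln_Jac_eq_ln_Bmu_density)
  then have "eint \<nu> (\<lambda>x. eint (K x) (\<lambda>\<theta>. ereal (ln (Jac \<mu> K x \<theta>))))
      = eint \<nu> (\<lambda>x. ereal (\<integral>\<theta>. ln (g (\<tau> \<theta> x) / Bmu \<mu> \<tau> g x) \<partial>K x))"
    by (intro antisym eint_mono_AE) (auto elim!: eventually_mono)
  then show ?thesis
    by (simp add: h_a_def eint_eq_integral integral_ln_Bmu_density)
qed

end

end

theorem mainTheorem5:
  fixes \<tau> :: "'t::metric_space \<Rightarrow> 'x::metric_space \<Rightarrow> 'x"
    and \<nu>hat :: "('x \<times> 't) measure"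
    and K :: "'x \<Rightarrow> 't measure"
    and \<mu> :: "'t measure"
  assumes X_compact: "compact (UNIV :: 'x set)"
    and Theta_compact: "compact (UNIV :: 't set)"
    and tau_cont: "continuous_on UNIV (\<lambda>(\<theta>, x). \<tau> \<theta> x)"
    and nuhat_prob: "prob_space \<nu>hat" and nuhat_sets: "sets \<nu>hat = sets borel"
    and holonomic: "\<And>f :: 'x \<Rightarrow> real. continuous_on UNIV f \<Longrightarrow>
        (\<integral> (x, \<theta>). f (\<tau> \<theta> x) - f x \<partial>\<nu>hat) = 0"
    and K_prob: "\<And>x. prob_space (K x)" and K_sets: "\<And>x. sets (K x) = sets borel"
    and K_meas: "\<And>A. A \<in> sets borel \<Longrightarrow> (\<lambda>x. emeasure (K x) A) \<in> borel_measurable borel"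
    and disint: "\<And>E. E \<in> sets borel \<Longrightarrow>
        emeasure \<nu>hat E = (\<integral>\<^sup>+ x. emeasure (K x) (Pair x -` E) \<partial>(distr \<nu>hat borel fst))"
    and mu_prob: "prob_space \<mu>" and mu_sets: "sets \<mu> = sets borel"
    and ac: "AE x in distr \<nu>hat borel fst. absolutely_continuous \<mu> (K x)"
  shows "h_a \<mu> K (distr \<nu>hat borel fst) \<le> h_v \<mu> \<tau> (distr \<nu>hat borel fst)
       \<and> h_v \<mu> \<tau> (distr \<nu>hat borel fst) \<le> 0
       \<and> (\<forall>\<phi> :: 'x \<Rightarrow> real. continuous_on UNIV \<phi> \<and> (\<forall>x. 0 < \<phi> x)
            \<and> (AE x in distr \<nu>hat borel fst. AE \<theta> in \<mu>.
                  Jac \<mu> K x \<theta> = \<phi> (\<tau> \<theta> x) / Bmu \<mu> \<tau> \<phi> x)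
          \<longrightarrow> h_a \<mu> K (distr \<nu>hat borel fst) = h_v \<mu> \<tau> (distr \<nu>hat borel fst)
            \<and> h_v \<mu> \<tau> (distr \<nu>hat borel fst)
                = ereal (\<integral> x. ln (Bmu \<mu> \<tau> \<phi> x / \<phi> x) \<partial>(distr \<nu>hat borel fst)))"
proof -
  interpret holonomic_disintegration \<tau> \<nu>hat K \<mu>
    by (rule holonomic_disintegration.intro[OF assms])
  have h_v_le: "h_v \<mu> \<tau> \<nu> \<le> ereal (\<integral>x. ln (Bmu \<mu> \<tau> g x / g x) \<partial>\<nu>)"
    if "continuous_on UNIV g" "\<forall>x. 0 < g x" for g
    unfolding h_v_def using that by (intro INF_lower) simp
  have h_a_le_h_v: "h_a \<mu> K \<nu> \<le> h_v \<mu> \<tau> \<nu>"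
    unfolding h_v_def by (rule INF_greatest) (simp add: h_a_le_integral_ln_Bmu_ratio)
  moreover have "h_v \<mu> \<tau> \<nu> \<le> 0"
    using h_v_le[of "\<lambda>_. 1"] by (simp add: Bmu_def prob_space.prob_space[OF mu_prob] zero_ereal_def)
  moreover have "h_a \<mu> K \<nu> = h_v \<mu> \<tau> \<nu>
      \<and> h_v \<mu> \<tau> \<nu> = ereal (\<integral>x. ln (Bmu \<mu> \<tau> \<phi> x / \<phi> x) \<partial>\<nu>)"
    if "continuous_on UNIV \<phi>" "\<forall>x. 0 < \<phi> x"
      "AE x in \<nu>. AE \<theta> in \<mu>. Jac \<mu> K x \<theta> = \<phi> (\<tau> \<theta> x) / Bmu \<mu> \<tau> \<phi> x" for \<phi>
    using h_a_eq_integral_ln_Bmu_ratio[OF that(1)] h_v_le[OF that(1,2)] h_a_le_h_v that(2,3)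
    by auto
  ultimately show ?thesis by blast
qed

end
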